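(* Let $d\geq 1$ be a fixed integer. For each integer $n\geq1$ define $f_n:\mathbb{R}\to\mathbb{R}$ to be the function which is constant on each interval $\left[\frac{k-\frac nd}{\sqrt{n/d}},\frac{k+1-\frac nd}{\sqrt{n/d}}\right)$, $k\in\mathbb{Z}$, and satisfies $$f_n\!\left(\frac{k-\frac nd}{\sqrt{n/d}}\right)=\begin{cases}\sqrt{\frac nd}\,\dfrac{(n/d)^k e^{-n/d}}{k!} & \text{if } k \text{ is a non-negative integer},\\ 0 & \text{if } k \text{ is a negative integer}.\end{cases}$$ For a function $f:\mathbb{R}\to\mathbb{R}$ define $\Delta_n f(y)=\dfrac{f\big(y+\sqrt{d/n}\big)-f(y)}{\sqrt{d/n}}$ and let $\Delta_n^\alpha$ denote its $\alpha$-fold iterate. Then for each integer $\alpha\geq0$ and each $y\in\mathbb{R}$, $$\lim_{n\to\infty}\Delta_n^\alpha f_n(y)=\frac{\mathrm{d}^\alpha}{\mathrm{d}y^\alpha}\left(\frac{1}{\sqrt{2\pi}}e^{-y^2/2}\right).$$ Furthermore, for each integer $\alpha\geq0$ there exists a polynomial $P_\alpha$ such that $|\Delta_n^\alpha f_n(y)|<P_\alpha(y)e^{-|y|}$ for all $n\geq1$ and all $y\in\mathbb{R}$. *)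

theory Defs
  imports "HOL-Analysis.Analysis" "HOL-Computational_Algebra.Polynomial"
begin

text \<open>The step function f_n (depending on the fixed d): on the interval
  [(k - n/d)/sqrt(n/d), (k+1 - n/d)/sqrt(n/d)) it takes the value
  sqrt(n/d) (n/d)^k e^(-n/d) / k! if k >= 0, and 0 if k < 0.
  The point y lies in that interval iff k = floor(y sqrt(n/d) + n/d).\<close>
definition fstep :: "nat \<Rightarrow> nat \<Rightarrow> real \<Rightarrow> real" where
  "fstep d n y =
     (let lam = real n / real d;
          k = \<lfloor>y * sqrt lam + lam\<rfloor>
      in if k \<ge> 0 then sqrt lam * lam ^ nat k * exp (- lam) / fact (nat k) else 0)"

definition Delta :: "nat \<Rightarrow> nat \<Rightarrow> (real \<Rightarrow> real) \<Rightarrow> real \<Rightarrow> real" where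
  "Delta d n f y = (f (y + sqrt (real d / real n)) - f y) / sqrt (real d / real n)"

end

theory Submission
  imports Defs "HOL-Complex_Analysis.Cauchy_Integral_Formula" "HOL-Probability.Characteristic_Functions"
begin

text \<open>With \<lambda> = n/d, the value of f_n at y is sqrt \<lambda> times the Poisson weight \<lambda>^k e^(-\<lambda>) / k!
  at k = \<lfloor>y sqrt \<lambda> + \<lambda>\<rfloor> (and 0 for k < 0). By Cauchy's formula, \<lambda>^k / k! is (2\<pi>)^(-1) times the
  integral of e^(\<lambda>z) z^(-k) d\<theta> over any circle z = r e^(i\<theta>), and this integral vanishes for k < 0.
  A step of \<Delta>_n shifts k by one, so \<Delta>_n^\<alpha> f_n(y) is the same integral with the extra factor
  (sqrt \<lambda> (1/z - 1))^\<alpha>.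

  On the unit circle, the substitution \<theta> = t / sqrt \<lambda> turns the integrand into a function of t
  that converges to (-it)^\<alpha> e^(-t^2/2) e^(-iyt) and is dominated by e^(-t^2/12) (1 + |t|)^\<alpha>, so
  by dominated convergence the limit is (2\<pi>)^(-1) times the integral of the former. Differentiating
  the Fourier representation of the Gaussian density under the integral sign identifies this with
  the \<alpha>-th derivative of the density. On the circle of radius e^(\<plusminus>1/sqrt \<lambda>), with the sign of y, the integrand is
  bounded by a constant times e^(-|y|), uniformly in n.\<close>

section \<open>Cauchy's formula for Taylor coefficients on a circle\<close>

lemma uminus_circlepath_0: "uminus \<circ> circlepath 0 r = part_circlepath 0 r (-pi) pi"
proof
  fix t
  have "exp (\<i> * complex_of_real (linepath (-pi) pi t)) = - exp (\<i> * complex_of_real (linepath 0 (2 * pi) t))"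
    by (simp add: linepath_def algebra_simps exp_diff)
  then show "(uminus \<circ> circlepath 0 r) t = part_circlepath 0 r (-pi) pi t"
    by (simp add: circlepath_def part_circlepath_def)
qed

text \<open>The circle traversed from -r is the negated circlepath, so Cauchy's formula applied to
  f(-z) gives an integral over the symmetric angle interval [-\<pi>, \<pi>].\<close>
lemma Cauchy_coefficient_has_integral:
  fixes f :: "complex \<Rightarrow> complex" and r :: real
  assumes contf: "continuous_on (cball 0 r) f" and holf: "f holomorphic_on ball 0 r" and r: "0 < r"
  shows "((\<lambda>\<theta>. f (r * cis \<theta>) / (r * cis \<theta>) ^ k) has_integral 2 * pi * (deriv ^^ k) f 0 / fact k) {-pi..pi}"
proof -
  define g where "g u = f (- u)" for u
  have "continuous_on (cball 0 r) g"
    unfolding g_def by (intro continuous_on_compose2[OF contf] continuous_intros) auto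
  moreover have "g holomorphic_on ball 0 r"
    unfolding g_def by (intro holomorphic_on_compose_gen[OF _ holf, unfolded o_def] holomorphic_intros) auto
  ultimately have "((\<lambda>u. g u / (u - 0) ^ Suc k) has_contour_integral 2 * pi * \<i> / fact k * (deriv ^^ k) g 0) (circlepath 0 r)"
    using r by (intro Cauchy_has_contour_integral_higher_derivative_circlepath) auto
  moreover have "(deriv ^^ k) g 0 = (-1) ^ k * (deriv ^^ k) f 0"
    using higher_deriv_compose_linear'[OF holf, of "ball 0 r" 0 "-1" 0 k] r unfolding g_def by simp
  ultimately have "((\<lambda>u. (-1) ^ Suc k * (f (- u) / u ^ Suc k)) has_contour_integral
      (-1) ^ Suc k * (2 * pi * \<i> / fact k * ((-1) ^ k * (deriv ^^ k) f 0))) (circlepath 0 r)"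
    unfolding g_def by (intro has_contour_integral_lmul) simp
  moreover have "(-1::complex) ^ Suc k * (-1) ^ k = -1"
    by (simp flip: power_mult_distrib)
  moreover have "(-1) ^ Suc k * (f (- u) / u ^ Suc k) = f (- u) / (- u) ^ Suc k" for u
    by (cases "even k") (simp_all add: power_minus[of u])
  ultimately have "((\<lambda>u. f (- u) / (- u) ^ Suc k) has_contour_integral - (2 * pi * \<i> * (deriv ^^ k) f 0 / fact k)) (circlepath 0 r)"
    by (simp add: mult_ac)
  then have "((\<lambda>u. f u / u ^ Suc k) has_contour_integral 2 * pi * \<i> * (deriv ^^ k) f 0 / fact k) (part_circlepath 0 r (-pi) pi)"
    using has_contour_integral_negatepath[of "circlepath 0 r"] by (simp add: uminus_circlepath_0)
  then have "((\<lambda>\<theta>. f (r * cis \<theta>) / (r * cis \<theta>) ^ Suc k * r * \<i> * cis \<theta>) has_integral 2 * pi * \<i> * (deriv ^^ k) f 0 / fact k) {-pi..pi}"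
    by (simp add: has_contour_integral_part_circlepath_iff)
  from has_integral_mult_right[OF this, of "- \<i>"] show ?thesis
    using r by (simp add: field_simps)
qed

lemma Cauchy_coefficient_powi_has_integral:
  fixes f :: "complex \<Rightarrow> complex" and r :: real and m :: int
  assumes contf: "continuous_on (cball 0 r) f" and holf: "f holomorphic_on ball 0 r" and r: "0 < r"
  shows "((\<lambda>\<theta>. f (r * cis \<theta>) * (r * cis \<theta>) powi (- m)) has_integral
           (if 0 \<le> m then 2 * pi * (deriv ^^ nat m) f 0 / fact (nat m) else 0)) {-pi..pi}"
proof (cases "0 \<le> m")
  case True
  then show ?thesis
    using Cauchy_coefficient_has_integral[OF assms, of "nat m"]
    by (simp add: power_int_minus divide_inverse flip: power_int_of_nat)
next
  case False
  define M where "M = nat (- m)"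
  have "continuous_on (cball 0 r) (\<lambda>z. f z * z ^ M)" "(\<lambda>z. f z * z ^ M) holomorphic_on ball 0 r"
    by (intro continuous_intros holomorphic_intros contf holf)+
  from Cauchy_coefficient_has_integral[OF this r, of 0] False show ?thesis
    by (simp add: M_def power_int_def power_0_left)
qed

lemma higher_deriv_exp_linear: "(deriv ^^ k) (\<lambda>u. exp (c * u)) = (\<lambda>u. c ^ k * exp (c * u :: complex))"
proof (induction k)
  case (Suc k)
  have "((\<lambda>u. c ^ k * exp (c * u)) has_field_derivative c ^ Suc k * exp (c * u)) (at u)" for u
    by (auto intro!: derivative_eq_intros)
  then show ?case
    using Suc by (auto simp: DERIV_imp_deriv)
qed simp

section \<open>An integral representation of the iterated differences\<close>

text \<open>With z = r e^(i\<theta>): the Cauchy integrand e^(\<lambda>z) z^(-m) of \<lambda>^m / m!, times the factor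
  (sqrt \<lambda> (1/z - 1))^\<alpha> contributed by \<alpha> steps of \<Delta>_n, each of which shifts m by one.\<close>
definition Delta_kernel :: "real \<Rightarrow> real \<Rightarrow> int \<Rightarrow> nat \<Rightarrow> real \<Rightarrow> complex" where
  "Delta_kernel lam r m \<alpha> \<theta> =
     exp (lam * (r * cis \<theta>)) * (r * cis \<theta>) powi (- m) * (sqrt lam * (inverse (r * cis \<theta>) - 1)) ^ \<alpha>"

lemma continuous_on_Delta_kernel: "0 < r \<Longrightarrow> continuous_on S (Delta_kernel lam r m \<alpha>)"
  unfolding Delta_kernel_def by (intro continuous_intros) auto

lemma Delta_kernel_integrable: "0 < r \<Longrightarrow> Delta_kernel lam r m \<alpha> integrable_on {a..b}"
  by (intro integrable_continuous_interval continuous_on_Delta_kernel)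

lemma Delta_kernel_Suc:
  assumes "0 < r"
  shows "Delta_kernel lam r m (Suc \<alpha>) \<theta> = sqrt lam * (Delta_kernel lam r (m + 1) \<alpha> \<theta> - Delta_kernel lam r m \<alpha> \<theta>)"
proof -
  let ?z = "complex_of_real r * cis \<theta>"
  have "?z powi (- (m + 1)) = ?z powi (- m) * inverse ?z"
    using power_int_diff[of ?z "- m" 1] assms by (simp add: divide_inverse)
  then show ?thesis
    unfolding Delta_kernel_def by (simp add: algebra_simps)
qed

lemma Delta_kernel_0_has_integral:
  assumes "0 < r"
  shows "(Delta_kernel lam r m 0 has_integral of_real (2 * pi * (if 0 \<le> m then lam ^ nat m / fact (nat m) else 0))) {-pi..pi}"
proof -
  let ?f = "\<lambda>z. exp (complex_of_real lam * z)"
  have "continuous_on (cball 0 r) ?f" "?f holomorphic_on ball 0 r"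
    by (intro continuous_intros holomorphic_intros)+
  from Cauchy_coefficient_powi_has_integral[OF this assms, of m]
  have "((\<lambda>\<theta>. ?f (r * cis \<theta>) * (r * cis \<theta>) powi (- m)) has_integral
     of_real (2 * pi * (if 0 \<le> m then lam ^ nat m / fact (nat m) else 0))) {-pi..pi}"
    by (cases "0 \<le> m") (simp_all add: higher_deriv_exp_linear)
  moreover have "Delta_kernel lam r m 0 = (\<lambda>\<theta>. ?f (r * cis \<theta>) * (r * cis \<theta>) powi (- m))"
    by (simp add: fun_eq_iff Delta_kernel_def)
  ultimately show ?thesis by simp
qed

lemma Delta_eq: "Delta d n g y = sqrt (real n / real d) * (g (y + 1 / sqrt (real n / real d)) - g y)"
  unfolding Delta_def by (simp add: real_sqrt_divide field_simps)

lemma floor_shift_inverse: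
  assumes "0 < s"
  shows "\<lfloor>(y + 1 / s) * s + lam\<rfloor> = \<lfloor>y * s + lam\<rfloor> + 1"
proof -
  have "(y + 1 / s) * s + lam = (y * s + lam) + 1" using assms by (simp add: field_simps)
  then show ?thesis by (simp only: one_add_floor)
qed

lemma Delta_iterate_fstep_eq_integral:
  assumes "1 \<le> d" "1 \<le> n" "0 < r" and lam: "lam = real n / real d"
  shows "complex_of_real ((Delta d n ^^ \<alpha>) (fstep d n) y) =
    of_real (sqrt lam * exp (- lam) / (2 * pi)) * integral {-pi..pi} (Delta_kernel lam r \<lfloor>y * sqrt lam + lam\<rfloor> \<alpha>)"
proof (induction \<alpha> arbitrary: y)
  case 0
  show ?case
    using integral_unique[OF Delta_kernel_0_has_integral[OF \<open>0 < r\<close>]]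
    by (simp add: fstep_def Let_def lam)
next
  case (Suc \<alpha>)
  have "0 < lam" using assms by simp
  let ?D = "(Delta d n ^^ \<alpha>) (fstep d n)"
  let ?K = "\<lambda>\<alpha> m. integral {-pi..pi} (Delta_kernel lam r m \<alpha>)"
  let ?m = "\<lfloor>y * sqrt lam + lam\<rfloor>"
  have "(Delta d n ^^ Suc \<alpha>) (fstep d n) y = sqrt lam * (?D (y + 1 / sqrt lam) - ?D y)"
    by (simp only: funpow.simps comp_apply Delta_eq[of d n ?D y] lam)
  then have "complex_of_real ((Delta d n ^^ Suc \<alpha>) (fstep d n) y) =
      sqrt lam * (complex_of_real (?D (y + 1 / sqrt lam)) - complex_of_real (?D y))"
    by simp
  also have "\<dots> = of_real (sqrt lam * exp (- lam) / (2 * pi)) * (sqrt lam * (?K \<alpha> (?m + 1) - ?K \<alpha> ?m))"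
    using Suc.IH[of y] Suc.IH[of "y + 1 / sqrt lam"] floor_shift_inverse[of "sqrt lam" y lam] \<open>0 < lam\<close>
    by (simp add: algebra_simps)
  also have "sqrt lam * (?K \<alpha> (?m + 1) - ?K \<alpha> ?m) = ?K (Suc \<alpha>) ?m"
  proof -
    have "?K (Suc \<alpha>) ?m = integral {-pi..pi} (\<lambda>\<theta>. sqrt lam * (Delta_kernel lam r (?m + 1) \<alpha> \<theta> - Delta_kernel lam r ?m \<alpha> \<theta>))"
      by (intro integral_cong) (simp add: Delta_kernel_Suc[OF \<open>0 < r\<close>])
    then show ?thesis
      by (simp add: integral_diff Delta_kernel_integrable[OF \<open>0 < r\<close>])
  qed
  finally show ?case .
qed

lemma one_minus_cos_ge:
  assumes "\<bar>x\<bar> \<le> pi"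
  shows "x\<^sup>2 / 12 \<le> 1 - cos x"
proof -
  let ?R = "iexp x - (\<Sum>k\<le>3. (\<i> * complex_of_real x) ^ k / fact k)"
  have "\<bar>x\<bar> ^ Suc 3 / fact (Suc 3) = x\<^sup>2 * x\<^sup>2 / 24"
    by (simp add: fact_numeral numeral_3_eq_3 power2_eq_square)
  then have "\<bar>Re ?R\<bar> \<le> x\<^sup>2 * x\<^sup>2 / 24"
    using abs_Re_le_cmod[of ?R] iexp_approx1[of x 3] by linarith
  moreover have "Re ?R = cos x - 1 + x\<^sup>2 / 2"
    by (simp add: numeral_3_eq_3 fact_numeral Re_exp power2_eq_square)
  moreover have "x\<^sup>2 \<le> 10"
  proof -
    have "\<bar>x\<bar>\<^sup>2 \<le> pi\<^sup>2" using assms by (intro power_mono) auto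
    then have "x\<^sup>2 \<le> pi\<^sup>2" by simp
    also have "pi\<^sup>2 \<le> 3.15\<^sup>2" using pi_approx(2) pi_gt3 by (intro power_mono) auto
    finally show ?thesis by (simp add: power2_eq_square)
  qed
  then have "x\<^sup>2 * x\<^sup>2 \<le> x\<^sup>2 * 10" by (intro mult_left_mono) auto
  ultimately show ?thesis by linarith
qed

lemma abs_exp_minus_one_le: "\<bar>exp v - 1\<bar> \<le> \<bar>v\<bar> * exp \<bar>v\<bar>" for v :: real
proof (cases "v \<ge> 0")
  case True
  have "exp v * (1 - v) \<le> exp v * exp (- v)"
    using exp_ge_add_one_self[of "- v"] by (intro mult_left_mono) auto
  with True show ?thesis by (simp add: algebra_simps exp_minus_inverse)
next
  case False
  have "1 - exp v \<le> - v" using exp_ge_add_one_self[of v] by linarith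
  also have "\<dots> \<le> - v * exp (- v)" using False by simp
  finally show ?thesis using False by (simp add: abs_if)
qed

lemma exp_taylor1_remainder_le:
  fixes u :: real
  assumes "0 \<le> u"
  shows "exp u - 1 - u \<le> u\<^sup>2 * exp u"
proof (cases "u \<le> 1")
  case True
  then have "exp u \<le> 1 + u + u\<^sup>2" using assms by (intro exp_bound) auto
  moreover have "u\<^sup>2 * 1 \<le> u\<^sup>2 * exp u" using assms by (intro mult_left_mono) auto
  ultimately show ?thesis by simp
next
  case False
  then have "exp u \<le> u\<^sup>2 * exp u" by simp
  with False show ?thesis by linarith
qed

lemma exp_minus_taylor1_remainder_le: "0 \<le> u \<Longrightarrow> exp (- u) - 1 + u \<le> u\<^sup>2" for u :: real
proof -
  assume "0 \<le> u"
  then have "exp (- u) \<le> 1 / (1 + u)"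
    using exp_ge_add_one_self[of u] by (simp add: exp_minus field_simps)
  also have "1 / (1 + u) = 1 - u + u\<^sup>2 / (1 + u)"
    using \<open>0 \<le> u\<close> by (simp add: field_simps power2_eq_square)
  also have "u\<^sup>2 / (1 + u) \<le> u\<^sup>2 / 1"
    using \<open>0 \<le> u\<close> by (intro divide_left_mono) auto
  finally show ?thesis by simp
qed

lemma norm_cis_minus_one_le: "cmod (cis x - 1) \<le> \<bar>x\<bar>"
  using iexp_approx1[of x 0] by (simp add: cis_conv_exp)

lemma norm_inverse_cis_minus_one_le:
  assumes "0 < r"
  shows "cmod (inverse (r * cis \<theta>) - 1) \<le> inverse r * \<bar>\<theta>\<bar> + \<bar>inverse r - 1\<bar>"
proof -
  have "inverse (r * cis \<theta>) - 1 = of_real (inverse r) * (cis (- \<theta>) - 1) + of_real (inverse r - 1)"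
    by (simp add: algebra_simps)
  also have "cmod \<dots> \<le> cmod (of_real (inverse r) * (cis (- \<theta>) - 1)) + cmod (of_real (inverse r - 1) :: complex)"
    by (rule norm_triangle_ineq)
  also have "\<dots> = inverse r * cmod (cis (- \<theta>) - 1) + \<bar>inverse r - 1\<bar>"
    using assms by (simp only: norm_mult norm_of_real) simp
  also have "\<dots> \<le> inverse r * \<bar>\<theta>\<bar> + \<bar>inverse r - 1\<bar>"
    using norm_cis_minus_one_le[of "- \<theta>"] assms by (simp add: mult_left_mono)
  finally show ?thesis .
qed

lemma norm_cis_taylor2_le: "cmod (cis \<theta> - 1 - \<i> * \<theta> + of_real (\<theta>\<^sup>2 / 2)) \<le> \<bar>\<theta>\<bar> ^ 3 / 6"
proof -
  have taylor: "(\<Sum>j\<le>2. (\<i> * complex_of_real \<theta>) ^ j / fact j) = 1 + \<i> * \<theta> - \<theta>\<^sup>2 / 2"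
    by (simp add: numeral_2_eq_2 power2_eq_square algebra_simps)
  show ?thesis
    using iexp_approx1[of \<theta> 2] unfolding taylor cis_conv_exp by (simp add: fact_numeral algebra_simps)
qed

lemma norm_cis_difference_quotient_le: "cmod ((cis (- (h * t)) - 1) / h) \<le> \<bar>t\<bar>"
proof (cases "h = 0")
  case False
  then show ?thesis
    using norm_cis_minus_one_le[of "- (h * t)"]
    by (simp add: norm_divide divide_le_eq abs_mult mult.commute)
qed simp

lemma LIMSEQ_by_norm_bound:
  fixes a :: "nat \<Rightarrow> 'a::real_normed_vector"
  assumes "\<And>n. norm (a n - L) \<le> b n" "b \<longlonglongrightarrow> 0"
  shows "a \<longlonglongrightarrow> L"
proof -
  have "(\<lambda>n. a n - L) \<longlonglongrightarrow> 0"
    by (rule Lim_null_comparison[OF _ assms(2)]) (use assms(1) in auto)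
  then show ?thesis by (simp add: LIM_zero_iff)
qed

lemma cis_difference_quotient_tendsto:
  assumes "h \<longlonglongrightarrow> 0" "\<And>k. h k \<noteq> 0"
  shows "(\<lambda>k. (cis (- (h k * t)) - 1) / h k) \<longlonglongrightarrow> - \<i> * t"
proof (rule LIMSEQ_by_norm_bound)
  fix k
  have "cmod (cis (- (h k * t)) - 1 + \<i> * (h k * t)) \<le> (h k)\<^sup>2 * t\<^sup>2 / 2"
    using iexp_approx1[of "- (h k * t)" 1]
    by (simp add: cis_conv_exp power2_eq_square algebra_simps)
  moreover have "(cis (- (h k * t)) - 1) / h k - - \<i> * t = (cis (- (h k * t)) - 1 + \<i> * (h k * t)) / h k"
    using assms(2)[of k] by (simp add: field_simps)
  ultimately show "cmod ((cis (- (h k * t)) - 1) / h k - - \<i> * t) \<le> \<bar>h k\<bar> * (t\<^sup>2 / 2)"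
    using assms(2)[of k] by (simp add: norm_divide divide_le_eq power2_eq_square algebra_simps)
next
  show "(\<lambda>k. \<bar>h k\<bar> * (t\<^sup>2 / 2)) \<longlonglongrightarrow> 0"
    by (intro tendsto_mult_left_zero tendsto_rabs_zero assms(1))
qed

lemma has_integral_rescale_interval:
  fixes f :: "real \<Rightarrow> 'a::real_normed_vector"
  assumes s: "0 < s" and f: "(f has_integral I) {a..b}"
  shows "((\<lambda>t. f (t / s)) has_integral s *\<^sub>R I) {a * s..b * s}"
proof -
  have "((\<lambda>t. f ((1 / s) *\<^sub>R t + 0)) has_integral I /\<^sub>R (1 / s) ^ DIM(real))
      (cbox ((a - 0) /\<^sub>R (1 / s)) ((b - 0) /\<^sub>R (1 / s)))"
    using f s by (intro has_integral_affinity') auto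
  then show ?thesis
    using s by (simp add: divide_inverse mult.commute)
qed

lemma gauss_moment_integrable:
  fixes c :: real
  assumes "0 < c"
  shows "(\<lambda>t. exp (- c * t\<^sup>2) * \<bar>t\<bar> ^ k) integrable_on UNIV"
proof -
  define \<sigma> where "\<sigma> = sqrt (1 / (2 * c))"
  have \<sigma>: "0 < \<sigma>" "\<sigma>\<^sup>2 = 1 / (2 * c)"
    using assms by (simp_all add: \<sigma>_def)
  have "integrable lborel (\<lambda>t. sqrt (2 * pi * \<sigma>\<^sup>2) * (normal_density 0 \<sigma> t * \<bar>t - 0\<bar> ^ k))"
    using integrable_normal_moment_abs[OF \<sigma>(1)] by (rule integrable_mult_right)
  moreover have "sqrt (2 * pi * \<sigma>\<^sup>2) * normal_density 0 \<sigma> t = exp (- c * t\<^sup>2)" for t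
    using \<sigma> assms by (simp add: normal_density_def field_simps)
  ultimately have "integrable lborel (\<lambda>t. exp (- c * t\<^sup>2) * \<bar>t\<bar> ^ k)"
    by (simp add: mult.assoc [symmetric])
  then show ?thesis by (rule integrable_on_lborel)
qed

lemma integrable_on_UNIV_by_continuous_bound:
  fixes f :: "'a::euclidean_space \<Rightarrow> 'b::euclidean_space"
  assumes "continuous_on UNIV f" "\<And>t. norm (f t) \<le> g t" "g integrable_on UNIV"
  shows "f integrable_on UNIV"
proof (rule integrable_on_all_intervals_integrable_bound[OF _ _ assms(3)])
  show "(\<lambda>x. if x \<in> UNIV then f x else 0) integrable_on cbox a b" for a b
    using continuous_on_subset[OF assms(1)] by (simp add: integrable_continuous)
qed (use assms(2) in auto)

definition gauss_majorant :: "real \<Rightarrow> nat \<Rightarrow> real \<Rightarrow> real" where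
  "gauss_majorant c \<alpha> t = exp (- c * t\<^sup>2) * (1 + \<bar>t\<bar>) ^ \<alpha>"

lemma gauss_majorant_nonneg: "0 \<le> gauss_majorant c \<alpha> t"
  by (simp add: gauss_majorant_def)

lemma continuous_on_gauss_majorant: "continuous_on S (gauss_majorant c \<alpha>)"
  unfolding gauss_majorant_def by (intro continuous_intros)

lemma gauss_majorant_integrable:
  assumes "0 < c"
  shows "gauss_majorant c \<alpha> integrable_on UNIV"
proof (rule integrable_on_UNIV_by_continuous_bound[OF continuous_on_gauss_majorant])
  have binomial_bound: "(1 + \<bar>t\<bar>) ^ \<alpha> \<le> 2 ^ \<alpha> * (\<bar>t\<bar> ^ 0 + \<bar>t\<bar> ^ \<alpha>)" for t :: real
  proof (cases "\<bar>t\<bar> \<le> 1")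
    case True
    then have "(1 + \<bar>t\<bar>) ^ \<alpha> \<le> 2 ^ \<alpha>" by (intro power_mono) auto
    moreover have "2 ^ \<alpha> * 1 \<le> 2 ^ \<alpha> * (\<bar>t\<bar> ^ 0 + \<bar>t\<bar> ^ \<alpha>)" by (intro mult_left_mono) auto
    ultimately show ?thesis by linarith
  next
    case False
    then have "(1 + \<bar>t\<bar>) ^ \<alpha> \<le> (2 * \<bar>t\<bar>) ^ \<alpha>" by (intro power_mono) auto
    moreover have "(0::real) \<le> 2 ^ \<alpha>" by simp
    ultimately show ?thesis by (simp add: power_mult_distrib distrib_left add_increasing)
  qed
  show "norm (gauss_majorant c \<alpha> t) \<le>
      2 ^ \<alpha> * (exp (- c * t\<^sup>2) * \<bar>t\<bar> ^ 0 + exp (- c * t\<^sup>2) * \<bar>t\<bar> ^ \<alpha>)" for t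
  proof -
    have "norm (gauss_majorant c \<alpha> t) = exp (- c * t\<^sup>2) * (1 + \<bar>t\<bar>) ^ \<alpha>"
      by (simp add: gauss_majorant_def)
    also have "\<dots> \<le> exp (- c * t\<^sup>2) * (2 ^ \<alpha> * (\<bar>t\<bar> ^ 0 + \<bar>t\<bar> ^ \<alpha>))"
      by (intro mult_left_mono binomial_bound) auto
    finally show ?thesis by (simp add: algebra_simps)
  qed
  show "(\<lambda>t. 2 ^ \<alpha> * (exp (- c * t\<^sup>2) * \<bar>t\<bar> ^ 0 + exp (- c * t\<^sup>2) * \<bar>t\<bar> ^ \<alpha>)) integrable_on UNIV"
    using integrable_cmul[OF integrable_add[OF gauss_moment_integrable[OF assms, of 0]
        gauss_moment_integrable[OF assms, of \<alpha>]], of "2 ^ \<alpha>"] by simp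
qed

lemma gauss_majorant_rescaled_integral_le:
  assumes "0 < c" "0 < s"
  shows "s * integral {-pi..pi} (\<lambda>\<theta>. gauss_majorant c \<alpha> (s * \<theta>)) \<le> integral UNIV (gauss_majorant c \<alpha>)"
proof -
  have "((\<lambda>\<theta>. gauss_majorant c \<alpha> (s * \<theta>)) has_integral integral {-pi..pi} (\<lambda>\<theta>. gauss_majorant c \<alpha> (s * \<theta>))) {-pi..pi}"
    unfolding gauss_majorant_def by (intro integrable_integral integrable_continuous_interval continuous_intros)
  from has_integral_rescale_interval[OF assms(2) this]
  have "s * integral {-pi..pi} (\<lambda>\<theta>. gauss_majorant c \<alpha> (s * \<theta>)) = integral {-(pi * s)..pi * s} (gauss_majorant c \<alpha>)"
    using assms(2) by (simp add: integral_unique)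
  also have "\<dots> \<le> integral UNIV (gauss_majorant c \<alpha>)"
    by (intro integral_subset_le gauss_majorant_integrable integrable_continuous_interval
        continuous_on_gauss_majorant assms) (auto simp: gauss_majorant_nonneg)
  finally show ?thesis .
qed

section \<open>Uniform exponential decay\<close>

lemma norm_exp_circle_le:
  assumes lam: "0 \<le> lam" and r: "0 < r" and \<theta>: "\<bar>\<theta>\<bar> \<le> pi" and c: "12 * c \<le> r"
  shows "cmod (exp (lam * (r * cis \<theta>))) \<le> exp (lam * r) * exp (- c * (sqrt lam * \<theta>)\<^sup>2)"
proof -
  have "lam * (12 * c * (\<theta>\<^sup>2 / 12)) \<le> lam * (r * (1 - cos \<theta>))"
    using c r one_minus_cos_ge[OF \<theta>] lam by (intro mult_left_mono mult_mono) auto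
  then have "lam * r * cos \<theta> \<le> lam * r - c * (sqrt lam * \<theta>)\<^sup>2"
    using lam by (simp add: algebra_simps)
  then show ?thesis
    by (simp flip: exp_add)
qed

lemma norm_Delta_symbol_le:
  assumes lam: "0 \<le> lam" and r: "0 < r"
    and E: "inverse r \<le> E" "sqrt lam * \<bar>inverse r - 1\<bar> \<le> E"
  shows "cmod (sqrt lam * (inverse (r * cis \<theta>) - 1)) \<le> E * (1 + \<bar>sqrt lam * \<theta>\<bar>)"
proof -
  have "cmod (sqrt lam * (inverse (r * cis \<theta>) - 1)) = sqrt lam * cmod (inverse (r * cis \<theta>) - 1)"
    using lam by (simp only: norm_mult norm_of_real) simp
  also have "\<dots> \<le> sqrt lam * (inverse r * \<bar>\<theta>\<bar> + \<bar>inverse r - 1\<bar>)"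
    using lam by (intro mult_left_mono norm_inverse_cis_minus_one_le r) simp
  also have "\<dots> = inverse r * \<bar>sqrt lam * \<theta>\<bar> + sqrt lam * \<bar>inverse r - 1\<bar>"
    using lam by (simp add: algebra_simps abs_mult)
  also have "\<dots> \<le> E * (1 + \<bar>sqrt lam * \<theta>\<bar>)"
    using E mult_right_mono[OF E(1), of "\<bar>sqrt lam * \<theta>\<bar>"] by (simp add: algebra_simps)
  finally show ?thesis .
qed

lemma norm_Delta_kernel_le:
  assumes "0 \<le> lam" and r: "0 < r" and "\<bar>\<theta>\<bar> \<le> pi" "12 * c \<le> r"
    and "inverse r \<le> E" "sqrt lam * \<bar>inverse r - 1\<bar> \<le> E"
  shows "cmod (Delta_kernel lam r m \<alpha> \<theta>) \<le>
    exp (lam * r) * r powi (- m) * E ^ \<alpha> * gauss_majorant c \<alpha> (sqrt lam * \<theta>)"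
proof -
  have "cmod (sqrt lam * (inverse (r * cis \<theta>) - 1)) ^ \<alpha> \<le> (E * (1 + \<bar>sqrt lam * \<theta>\<bar>)) ^ \<alpha>"
    by (intro power_mono norm_Delta_symbol_le assms) simp
  then have symbol_part: "cmod ((sqrt lam * (inverse (r * cis \<theta>) - 1)) ^ \<alpha>) \<le> E ^ \<alpha> * (1 + \<bar>sqrt lam * \<theta>\<bar>) ^ \<alpha>"
    unfolding norm_power by (simp only: power_mult_distrib)
  have "cmod (Delta_kernel lam r m \<alpha> \<theta>) = cmod (exp (lam * (r * cis \<theta>))) * r powi (- m)
      * cmod ((sqrt lam * (inverse (r * cis \<theta>) - 1)) ^ \<alpha>)"
    using r by (simp add: Delta_kernel_def norm_mult norm_power_int)
  also have "\<dots> \<le> (exp (lam * r) * exp (- c * (sqrt lam * \<theta>)\<^sup>2)) * r powi (- m) * (E ^ \<alpha> * (1 + \<bar>sqrt lam * \<theta>\<bar>) ^ \<alpha>)"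
    using r by (intro mult_mono norm_exp_circle_le symbol_part mult_nonneg_nonneg assms) auto
  finally show ?thesis
    by (simp add: gauss_majorant_def mult_ac)
qed

lemma norm_integral_Delta_kernel_le:
  assumes lam: "0 < lam" and r: "0 < r" and c: "0 < c" "12 * c \<le> r"
    and E: "inverse r \<le> E" "sqrt lam * \<bar>inverse r - 1\<bar> \<le> E"
  shows "cmod (integral {-pi..pi} (Delta_kernel lam r m \<alpha>)) \<le>
    exp (lam * r) * r powi (- m) * E ^ \<alpha> * integral UNIV (gauss_majorant c \<alpha>) / sqrt lam"
proof -
  define K where "K = exp (lam * r) * r powi (- m) * E ^ \<alpha>"
  have "0 \<le> E" using E(1) r by (meson inverse_nonnegative_iff_nonnegative less_imp_le order_trans)
  then have "0 \<le> K" using r by (simp add: K_def)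
  have "continuous_on {-pi..pi} (\<lambda>\<theta>. gauss_majorant c \<alpha> (sqrt lam * \<theta>))"
    unfolding gauss_majorant_def by (intro continuous_intros)
  then have "cmod (integral {-pi..pi} (Delta_kernel lam r m \<alpha>)) \<le>
      integral {-pi..pi} (\<lambda>\<theta>. K * gauss_majorant c \<alpha> (sqrt lam * \<theta>))"
    using norm_Delta_kernel_le[of lam r _ c E m \<alpha>] assms unfolding K_def
    by (intro integral_norm_bound_integral Delta_kernel_integrable integrable_continuous_interval
        continuous_on_mult_left) auto
  also have "\<dots> = K * (sqrt lam * integral {-pi..pi} (\<lambda>\<theta>. gauss_majorant c \<alpha> (sqrt lam * \<theta>))) / sqrt lam"
    using lam by simp
  also have "\<dots> \<le> K * integral UNIV (gauss_majorant c \<alpha>) / sqrt lam"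
    using gauss_majorant_rescaled_integral_le[of c "sqrt lam" \<alpha>] c lam \<open>0 \<le> K\<close>
    by (intro divide_right_mono mult_left_mono) auto
  finally show ?thesis by (simp add: K_def)
qed

text \<open>The exponent of e^(-\<lambda>) e^(\<lambda>r) r^(-m) for the saddle-point radius r = e^(\<plusminus>1/sqrt \<lambda>),
  with the sign of y; this radius turns the Poisson tail into the decay e^(-|y|).\<close>
lemma saddle_point_exponent_le:
  fixes lam q y :: real
  assumes lam: "0 < lam" and q: "1 / sqrt lam \<le> q"
  defines "\<sigma> \<equiv> if 0 \<le> y then 1 else - 1"
  shows "lam * (exp (\<sigma> / sqrt lam) - 1) - \<sigma> / sqrt lam * \<lfloor>y * sqrt lam + lam\<rfloor> \<le> exp q + q - \<bar>y\<bar>"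
proof -
  define u where "u = 1 / sqrt lam"
  let ?m = "\<lfloor>y * sqrt lam + lam\<rfloor>"
  have u: "0 < u" "u \<le> q" "lam * u = sqrt lam" "lam * u\<^sup>2 = 1" "sqrt lam * u = 1"
    using lam q by (simp_all add: u_def field_simps power2_eq_square)
  show ?thesis
  proof (cases "0 \<le> y")
    case True
    have "(y * sqrt lam + lam - 1) * u = y * (sqrt lam * u) + lam * u - u"
      by (simp add: algebra_simps)
    then have "y + sqrt lam - u = (y * sqrt lam + lam - 1) * u"
      using u by simp
    also have "\<dots> \<le> u * ?m"
      using u by (simp add: mult.commute mult_left_mono)
    finally have "lam * (exp u - 1) - u * ?m \<le> lam * (exp u - 1 - u) + u - y"
      using u by (simp add: algebra_simps)
    also have "lam * (exp u - 1 - u) \<le> lam * (u\<^sup>2 * exp u)"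
      using exp_taylor1_remainder_le[of u] u lam by (intro mult_left_mono) auto
    also have "lam * (u\<^sup>2 * exp u) \<le> exp q"
      using u by (simp add: mult.assoc [symmetric])
    finally show ?thesis using True u by (simp add: \<sigma>_def u_def)
  next
    case False
    have "u * ?m \<le> u * (y * sqrt lam + lam)"
      using u by (intro mult_left_mono) auto
    also have "\<dots> = y * (sqrt lam * u) + lam * u"
      by (simp add: algebra_simps)
    also have "\<dots> = y + sqrt lam"
      using u by simp
    finally have "lam * (exp (- u) - 1) + u * ?m \<le> lam * (exp (- u) - 1 + u) + y"
      using u by (simp add: algebra_simps)
    also have "lam * (exp (- u) - 1 + u) \<le> lam * u\<^sup>2"
      using exp_minus_taylor1_remainder_le[of u] u lam by (intro mult_left_mono) auto
    also have "lam * u\<^sup>2 \<le> exp q + q"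
      using u by (simp add: add_increasing2)
    finally show ?thesis using False by (simp add: \<sigma>_def u_def)
  qed
qed

lemma saddle_point_radius_bounds:
  fixes s q \<sigma> :: real
  assumes s: "0 < s" and q: "1 / s \<le> q" and \<sigma>: "\<bar>\<sigma>\<bar> = 1"
  shows "exp (- q) \<le> exp (\<sigma> / s)" "inverse (exp (\<sigma> / s)) \<le> exp q"
    "s * \<bar>inverse (exp (\<sigma> / s)) - 1\<bar> \<le> exp q"
proof -
  have abs_exponent: "\<bar>\<sigma> / s\<bar> = 1 / s" using s \<sigma> by simp
  with q have "- q \<le> \<sigma> / s"
    unfolding abs_le_iff by linarith
  then show "exp (- q) \<le> exp (\<sigma> / s)" "inverse (exp (\<sigma> / s)) \<le> exp q"
    by (simp_all flip: exp_minus)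
  have "\<bar>inverse (exp (\<sigma> / s)) - 1\<bar> \<le> 1 / s * exp (1 / s)"
    using abs_exp_minus_one_le[of "- (\<sigma> / s)"] unfolding abs_minus_cancel abs_exponent
    by (simp add: exp_minus)
  then have "s * \<bar>inverse (exp (\<sigma> / s)) - 1\<bar> \<le> exp (1 / s)"
    using s mult_left_mono[of _ _ s] by fastforce
  also have "\<dots> \<le> exp q" using q by simp
  finally show "s * \<bar>inverse (exp (\<sigma> / s)) - 1\<bar> \<le> exp q" .
qed

lemma inverse_sqrt_rate_le:
  assumes n: "1 \<le> n"
  shows "1 / sqrt (real n / real d) \<le> sqrt (real d)"
proof -
  have "real d * 1 \<le> real d * real n" using n by (intro mult_left_mono) auto
  then have "real d / real n \<le> real d" using n by (simp add: divide_le_eq)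
  then have "sqrt (real d / real n) \<le> sqrt (real d)" by (rule real_sqrt_le_mono)
  then show ?thesis by (simp add: real_sqrt_divide)
qed

lemma Delta_iterate_fstep_decay:
  assumes d: "1 \<le> d"
  obtains C where "\<And>n y. 1 \<le> n \<Longrightarrow> \<bar>(Delta d n ^^ \<alpha>) (fstep d n) y\<bar> \<le> C * exp (- \<bar>y\<bar>)"
proof
  define q where "q = sqrt (real d)"
  define c where "c = exp (- q) / 12"
  define I where "I = integral UNIV (gauss_majorant c \<alpha>)"
  have "0 \<le> I"
    unfolding I_def c_def by (intro integral_nonneg gauss_majorant_integrable gauss_majorant_nonneg) auto
  fix n :: nat and y :: real
  assume n: "1 \<le> n"
  define lam where "lam = real n / real d"
  define \<sigma> :: real where "\<sigma> = (if 0 \<le> y then 1 else - 1)"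
  define r where "r = exp (\<sigma> / sqrt lam)"
  have lam: "0 < lam" using d n by (simp add: lam_def)
  have q: "1 / sqrt lam \<le> q"
    using inverse_sqrt_rate_le[OF n] by (simp add: lam_def q_def)
  have "0 < r" by (simp add: r_def)
  have "\<bar>\<sigma>\<bar> = 1" by (simp add: \<sigma>_def)
  from saddle_point_radius_bounds[of "sqrt lam" q, OF _ q this] lam
  have "12 * c \<le> r" "inverse r \<le> exp q" "sqrt lam * \<bar>inverse r - 1\<bar> \<le> exp q"
    by (simp_all add: c_def r_def)
  let ?m = "\<lfloor>y * sqrt lam + lam\<rfloor>"
  have exponent: "exp (- lam) * exp (lam * r) * r powi (- ?m) = exp (lam * (exp (\<sigma> / sqrt lam) - 1) - \<sigma> / sqrt lam * ?m)"
    unfolding r_def exp_power_int by (simp only: exp_add [symmetric]) (simp add: algebra_simps)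
  have "\<bar>(Delta d n ^^ \<alpha>) (fstep d n) y\<bar> = cmod (complex_of_real ((Delta d n ^^ \<alpha>) (fstep d n) y))"
    by simp
  also have "\<dots> = sqrt lam * exp (- lam) / (2 * pi) * cmod (integral {-pi..pi} (Delta_kernel lam r ?m \<alpha>))"
    using Delta_iterate_fstep_eq_integral[OF d n \<open>0 < r\<close> lam_def] lam by (simp only: norm_mult norm_of_real) simp
  also have "\<dots> \<le> sqrt lam * exp (- lam) / (2 * pi) * (exp (lam * r) * r powi (- ?m) * exp q ^ \<alpha> * I / sqrt lam)"
    unfolding I_def using lam \<open>0 < r\<close> \<open>12 * c \<le> r\<close> \<open>inverse r \<le> exp q\<close> \<open>sqrt lam * \<bar>inverse r - 1\<bar> \<le> exp q\<close>
    by (intro mult_left_mono norm_integral_Delta_kernel_le) (auto simp: c_def)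
  also have "\<dots> = exp (- lam) * exp (lam * r) * r powi (- ?m) * (exp q ^ \<alpha> * I / (2 * pi))"
    using lam by simp
  also have "\<dots> = exp (lam * (exp (\<sigma> / sqrt lam) - 1) - \<sigma> / sqrt lam * ?m) * (exp q ^ \<alpha> * I / (2 * pi))"
    using exponent by simp
  also have "\<dots> \<le> exp (exp q + q - \<bar>y\<bar>) * (exp q ^ \<alpha> * I / (2 * pi))"
    using saddle_point_exponent_le[OF lam q, of y] \<open>0 \<le> I\<close> by (intro mult_right_mono) (auto simp: \<sigma>_def)
  also have "\<dots> = exp (exp q + q) * exp q ^ \<alpha> * I / (2 * pi) * exp (- \<bar>y\<bar>)"
    by (simp add: exp_diff exp_minus field_simps)
  finally show "\<bar>(Delta d n ^^ \<alpha>) (fstep d n) y\<bar> \<le> exp (exp q + q) * exp q ^ \<alpha> * I / (2 * pi) * exp (- \<bar>y\<bar>)" .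
qed

section \<open>Derivatives of the Gaussian as Fourier integrals\<close>

lemma fourier_integral_diff_eq:
  fixes g :: "real \<Rightarrow> complex"
  assumes int: "\<And>z. (\<lambda>t. g t * cis (- (z * t))) integrable_on UNIV" and h: "h \<noteq> 0"
  shows "integral UNIV (\<lambda>t. g t * cis (- ((y + h) * t))) - integral UNIV (\<lambda>t. g t * cis (- (y * t))) =
    h * integral UNIV (\<lambda>t. g t * cis (- (y * t)) * ((cis (- (h * t)) - 1) / h))"
proof -
  have "integral UNIV (\<lambda>t. g t * cis (- ((y + h) * t))) - integral UNIV (\<lambda>t. g t * cis (- (y * t))) =
      integral UNIV (\<lambda>t. g t * cis (- ((y + h) * t)) - g t * cis (- (y * t)))"
    by (simp add: integral_diff int)
  also have "(\<lambda>t. g t * cis (- ((y + h) * t)) - g t * cis (- (y * t))) =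
      (\<lambda>t. h * (g t * cis (- (y * t)) * ((cis (- (h * t)) - 1) / h)))"
  proof
    fix t
    have "cis (- ((y + h) * t)) = cis (- (y * t)) * cis (- (h * t))"
      by (simp add: cis_mult algebra_simps)
    then show "g t * cis (- ((y + h) * t)) - g t * cis (- (y * t)) = h * (g t * cis (- (y * t)) * ((cis (- (h * t)) - 1) / h))"
      using h by (simp add: field_simps)
  qed
  finally show ?thesis
    by (simp only: integral_mult_right)
qed

lemma fourier_difference_quotient_tendsto:
  fixes g :: "real \<Rightarrow> complex"
  assumes cont: "continuous_on UNIV g" and int: "(\<lambda>t. cmod (g t) * \<bar>t\<bar>) integrable_on UNIV"
    and h: "h \<longlonglongrightarrow> 0" "\<And>k. h k \<noteq> 0"
  shows "(\<lambda>k. integral UNIV (\<lambda>t. g t * cis (- (y * t)) * ((cis (- (h k * t)) - 1) / h k)))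
           \<longlonglongrightarrow> integral UNIV (\<lambda>t. - \<i> * t * g t * cis (- (y * t)))"
proof -
  let ?Q = "\<lambda>k t. g t * cis (- (y * t)) * ((cis (- (h k * t)) - 1) / h k)"
  have Q_bound: "cmod (?Q k t) \<le> cmod (g t) * \<bar>t\<bar>" for k t
  proof -
    have "cmod (?Q k t) = cmod (g t) * cmod ((cis (- (h k * t)) - 1) / h k)"
      unfolding norm_mult by simp
    then show ?thesis
      by (metis mult_left_mono norm_ge_zero norm_cis_difference_quotient_le)
  qed
  show ?thesis
  proof (rule dominated_convergence(2)[OF _ int])
    show "?Q k integrable_on UNIV" for k
      by (rule integrable_on_UNIV_by_continuous_bound[OF _ Q_bound int])
         (intro continuous_intros cont, simp add: h)
    show "(\<lambda>k. ?Q k t) \<longlonglongrightarrow> - \<i> * t * g t * cis (- (y * t))" for t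
    proof -
      have "(\<lambda>k. ?Q k t) \<longlonglongrightarrow> g t * cis (- (y * t)) * (- \<i> * t)"
        by (intro tendsto_mult_left cis_difference_quotient_tendsto h)
      then show ?thesis by (simp add: mult_ac)
    qed
  qed (use Q_bound in auto)
qed

lemma has_real_derivative_Re_fourier_integral:
  fixes g :: "real \<Rightarrow> complex"
  assumes cont: "continuous_on UNIV g"
    and int: "(\<lambda>t. cmod (g t)) integrable_on UNIV" "(\<lambda>t. cmod (g t) * \<bar>t\<bar>) integrable_on UNIV"
  defines "F \<equiv> \<lambda>y. integral UNIV (\<lambda>t. g t * cis (- (y * t)))"
  shows "((\<lambda>y. Re (F y)) has_real_derivative Re (integral UNIV (\<lambda>t. - \<i> * t * g t * cis (- (y * t))))) (at y)"
proof -
  have "continuous_on UNIV (\<lambda>t. g t * cis (- (z * t)))" for z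
    by (intro continuous_intros cont)
  then have F_integrable: "(\<lambda>t. g t * cis (- (z * t))) integrable_on UNIV" for z
    by (rule integrable_on_UNIV_by_continuous_bound[OF _ _ int(1)]) (simp add: norm_mult)
  have "((\<lambda>z. (Re (F z) - Re (F y)) / (z - y)) \<longlongrightarrow> Re (integral UNIV (\<lambda>t. - \<i> * t * g t * cis (- (y * t))))) (at y)"
    unfolding tendsto_at_iff_sequentially comp_def
  proof (intro allI impI)
    fix X :: "nat \<Rightarrow> real"
    assume X: "\<forall>k. X k \<in> UNIV - {y}" "X \<longlonglongrightarrow> y"
    define h where "h k = X k - y" for k
    have h: "h \<longlonglongrightarrow> 0" "h k \<noteq> 0" for k
      using X unfolding h_def[abs_def] by (auto intro: LIM_zero)
    let ?Q = "\<lambda>k. integral UNIV (\<lambda>t. g t * cis (- (y * t)) * ((cis (- (h k * t)) - 1) / h k))"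
    have "(Re (F (X k)) - Re (F y)) / (X k - y) = Re (?Q k)" for k
    proof -
      have "y + h k = X k" by (simp add: h_def)
      with fourier_integral_diff_eq[OF F_integrable h(2)[of k], of y]
      have "F (X k) - F y = h k * ?Q k"
        unfolding F_def by simp
      from arg_cong[where f = Re, OF this] have "Re (F (X k)) - Re (F y) = h k * Re (?Q k)"
        by simp
      then show ?thesis
        using h(2)[of k] unfolding h_def by simp
    qed
    then show "(\<lambda>k. (Re (F (X k)) - Re (F y)) / (X k - y)) \<longlonglongrightarrow> Re (integral UNIV (\<lambda>t. - \<i> * t * g t * cis (- (y * t))))"
      using tendsto_Re[OF fourier_difference_quotient_tendsto[OF cont int(2) h]] by simp
  qed
  then show ?thesis by (simp add: has_field_derivative_iff)
qed

definition gauss_fourier_integrand :: "nat \<Rightarrow> real \<Rightarrow> real \<Rightarrow> complex" where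
  "gauss_fourier_integrand \<alpha> y t = (- \<i> * t) ^ \<alpha> * of_real (exp (- t\<^sup>2 / 2)) * cis (- (y * t))"

lemma integral_gauss_fourier_integrand_0:
  "integral UNIV (gauss_fourier_integrand 0 y) = sqrt (2 * pi) * exp (- y\<^sup>2 / 2)"
proof -
  interpret std_normal: real_distribution std_normal_distribution
    by (rule real_dist_normal_dist)
  let ?f = "\<lambda>t. iexp (- y * t)"
  have meas: "?f \<in> borel_measurable lborel"
    by measurable
  have "integrable std_normal_distribution ?f"
    by (rule std_normal.integrable_iexp) simp_all
  then have int: "integrable lborel (\<lambda>t. std_normal_density t *\<^sub>R ?f t)"
    by (subst (asm) integrable_density) (auto simp: meas)
  have "exp (- y\<^sup>2 / 2) = char std_normal_distribution (- y)"
    by (simp add: char_std_normal_distribution)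
  also have "\<dots> = integral\<^sup>L lborel (\<lambda>t. std_normal_density t *\<^sub>R ?f t)"
    unfolding char_def by (rule integral_density) (auto simp: meas)
  also have "\<dots> = integral UNIV (\<lambda>t. std_normal_density t *\<^sub>R ?f t)"
    by (rule integral_lborel [symmetric, OF int])
  finally have "integral UNIV (\<lambda>t. std_normal_density t *\<^sub>R ?f t) = exp (- y\<^sup>2 / 2)" ..
  moreover have "gauss_fourier_integrand 0 y = (\<lambda>t. sqrt (2 * pi) * (std_normal_density t *\<^sub>R ?f t))"
    by (simp add: fun_eq_iff gauss_fourier_integrand_def std_normal_density_def scaleR_conv_of_real cis_conv_exp)
  then have "integral UNIV (gauss_fourier_integrand 0 y) = sqrt (2 * pi) * integral UNIV (\<lambda>t. std_normal_density t *\<^sub>R ?f t)"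
    by (simp only: integral_mult_right)
  ultimately show ?thesis
    by simp
qed

lemma higher_deriv_gaussian:
  "(deriv ^^ \<alpha>) (\<lambda>t. exp (- t\<^sup>2 / 2) / sqrt (2 * pi)) y = Re (integral UNIV (gauss_fourier_integrand \<alpha> y)) / (2 * pi)"
proof (induction \<alpha> arbitrary: y)
  case 0
  have "sqrt (2 * pi) * sqrt (2 * pi) = 2 * pi" by simp
  then show ?case
    by (simp add: integral_gauss_fourier_integrand_0 field_simps)
next
  case (Suc \<alpha>)
  let ?g = "\<lambda>t. (- \<i> * t) ^ \<alpha> * of_real (exp (- t\<^sup>2 / 2))"
  have "((\<lambda>y. Re (integral UNIV (\<lambda>t. ?g t * cis (- (y * t))))) has_real_derivative
      Re (integral UNIV (\<lambda>t. - \<i> * t * ?g t * cis (- (y * t))))) (at y)"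
  proof (rule has_real_derivative_Re_fourier_integral)
    show "continuous_on UNIV ?g" by (intro continuous_intros) auto
    show "(\<lambda>t. cmod (?g t)) integrable_on UNIV" "(\<lambda>t. cmod (?g t) * \<bar>t\<bar>) integrable_on UNIV"
      using gauss_moment_integrable[of "1 / 2" \<alpha>] gauss_moment_integrable[of "1 / 2" "Suc \<alpha>"]
      by (simp_all add: norm_mult norm_power mult_ac)
  qed
  then have "((\<lambda>y. Re (integral UNIV (gauss_fourier_integrand \<alpha> y)) / (2 * pi)) has_real_derivative
      Re (integral UNIV (gauss_fourier_integrand (Suc \<alpha>) y)) / (2 * pi)) (at y)"
    unfolding gauss_fourier_integrand_def by (intro DERIV_cdivide) (simp add: mult_ac)
  moreover have "(deriv ^^ \<alpha>) (\<lambda>t. exp (- t\<^sup>2 / 2) / sqrt (2 * pi)) =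
      (\<lambda>y. Re (integral UNIV (gauss_fourier_integrand \<alpha> y)) / (2 * pi))"
    by (rule ext) (rule Suc.IH)
  ultimately show ?case
    by (simp add: DERIV_imp_deriv)
qed

section \<open>Pointwise convergence\<close>

lemma poisson_phase_tendsto:
  assumes lam: "filterlim lam at_top sequentially" "\<And>k. 0 < lam k"
  shows "(\<lambda>k. of_real (lam k) * (cis (t / sqrt (lam k)) - 1) - \<i> * of_int \<lfloor>y * sqrt (lam k) + lam k\<rfloor> * of_real (t / sqrt (lam k)))
           \<longlonglongrightarrow> of_real (- t\<^sup>2 / 2) - \<i> * of_real (y * t)"
proof (rule LIMSEQ_by_norm_bound)
  fix k
  define s where "s = sqrt (lam k)"
  define \<theta> where "\<theta> = t / s"
  let ?m = "\<lfloor>y * s + s\<^sup>2\<rfloor>"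
  have s: "0 < s" "lam k = s\<^sup>2" using assms(2)[of k] by (simp_all add: s_def)
  have eq: "of_real (s\<^sup>2) * (cis \<theta> - 1) - \<i> * of_int ?m * of_real \<theta> - (of_real (- t\<^sup>2 / 2) - \<i> * of_real (y * t)) =
      of_real (s\<^sup>2) * (cis \<theta> - 1 - \<i> * \<theta> + \<theta>\<^sup>2 / 2) + \<i> * of_real (\<theta> * (y * s + s\<^sup>2 - ?m))"
    using s by (simp add: \<theta>_def field_simps power2_eq_square)
  have "cmod (of_real (s\<^sup>2) * (cis \<theta> - 1) - \<i> * of_int ?m * of_real \<theta> - (of_real (- t\<^sup>2 / 2) - \<i> * of_real (y * t)))
      \<le> s\<^sup>2 * (\<bar>\<theta>\<bar> ^ 3 / 6) + \<bar>\<theta>\<bar> * 1"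
    unfolding eq
  proof (rule norm_triangle_le[OF add_mono])
    show "cmod (of_real (s\<^sup>2) * (cis \<theta> - 1 - \<i> * \<theta> + \<theta>\<^sup>2 / 2)) \<le> s\<^sup>2 * (\<bar>\<theta>\<bar> ^ 3 / 6)"
      unfolding norm_mult norm_of_real abs_power2
      by (intro mult_left_mono norm_cis_taylor2_le) simp
    have "\<bar>y * s + s\<^sup>2 - ?m\<bar> \<le> 1" by linarith
    then show "cmod (\<i> * of_real (\<theta> * (y * s + s\<^sup>2 - ?m))) \<le> \<bar>\<theta>\<bar> * 1"
      unfolding norm_mult norm_ii norm_of_real abs_mult mult_1_left by (intro mult_left_mono) simp_all
  qed
  also have "s\<^sup>2 * (\<bar>\<theta>\<bar> ^ 3 / 6) + \<bar>\<theta>\<bar> * 1 = (\<bar>t\<bar> ^ 3 / 6 + \<bar>t\<bar>) * (1 / s)"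
    using s by (simp add: \<theta>_def power2_eq_square power3_eq_cube field_simps)
  finally show "cmod (of_real (lam k) * (cis (t / sqrt (lam k)) - 1) - \<i> * of_int \<lfloor>y * sqrt (lam k) + lam k\<rfloor> * of_real (t / sqrt (lam k))
      - (of_real (- t\<^sup>2 / 2) - \<i> * of_real (y * t))) \<le> (\<bar>t\<bar> ^ 3 / 6 + \<bar>t\<bar>) * (1 / sqrt (lam k))"
    unfolding s_def [symmetric] \<theta>_def [symmetric] unfolding s(2) .
next
  have "(\<lambda>k. inverse (sqrt (lam k))) \<longlonglongrightarrow> 0"
    by (rule tendsto_inverse_0_at_top[OF filterlim_compose[OF sqrt_at_top lam(1)]])
  then show "(\<lambda>k. (\<bar>t\<bar> ^ 3 / 6 + \<bar>t\<bar>) * (1 / sqrt (lam k))) \<longlonglongrightarrow> 0"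
    unfolding inverse_eq_divide [symmetric] by (rule tendsto_mult_right_zero)
qed

lemma exp_Delta_kernel_unit_circle:
  "of_real (exp (- lam)) * Delta_kernel lam 1 m \<alpha> \<theta> =
    exp (of_real lam * (cis \<theta> - 1) - \<i> * of_int m * of_real \<theta>) * (of_real (sqrt lam) * (cis (- \<theta>) - 1)) ^ \<alpha>"
proof -
  have powi: "cis \<theta> powi (- m) = exp (- (\<i> * of_int m * of_real \<theta>))"
    unfolding cis_power_int by (simp add: cis_conv_exp mult.assoc)
  have "exp (of_real lam * (cis \<theta> - 1) - \<i> * of_int m * of_real \<theta>) =
      exp (- of_real lam + of_real lam * cis \<theta> + - (\<i> * of_int m * of_real \<theta>))"
    by (rule arg_cong[where f = exp]) (simp add: algebra_simps)
  also have "\<dots> = of_real (exp (- lam)) * exp (of_real lam * cis \<theta>) * cis \<theta> powi (- m)"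
    unfolding exp_add powi by (simp flip: exp_of_real)
  finally show ?thesis
    by (simp add: Delta_kernel_def mult_ac)
qed

definition scaled_Delta_kernel :: "real \<Rightarrow> int \<Rightarrow> nat \<Rightarrow> real \<Rightarrow> complex" where
  "scaled_Delta_kernel lam m \<alpha> t =
     (if t \<in> {-(pi * sqrt lam)..pi * sqrt lam} then of_real (exp (- lam)) * Delta_kernel lam 1 m \<alpha> (t / sqrt lam) else 0)"

lemma Delta_iterate_fstep_eq_scaled_integral:
  assumes "1 \<le> d" "1 \<le> n" and lam: "lam = real n / real d"
  shows "complex_of_real ((Delta d n ^^ \<alpha>) (fstep d n) y) =
    integral UNIV (scaled_Delta_kernel lam \<lfloor>y * sqrt lam + lam\<rfloor> \<alpha>) / (2 * pi)"
proof -
  define s where "s = sqrt lam"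
  define m where "m = \<lfloor>y * s + lam\<rfloor>"
  have s: "0 < s" using assms by (simp add: s_def)
  let ?I = "integral {-pi..pi} (Delta_kernel lam 1 m \<alpha>)"
  have "(Delta_kernel lam 1 m \<alpha> has_integral ?I) {-pi..pi}"
    by (intro integrable_integral Delta_kernel_integrable) simp
  from has_integral_rescale_interval[OF s this]
  have "((\<lambda>t. Delta_kernel lam 1 m \<alpha> (t / s)) has_integral of_real s * ?I) {-(pi * s)..pi * s}"
    by (simp add: scaleR_conv_of_real)
  then have "integral UNIV (scaled_Delta_kernel lam m \<alpha>) = of_real (exp (- lam)) * (of_real s * ?I)"
    unfolding scaled_Delta_kernel_def integral_restrict_UNIV s_def [symmetric]
    by (simp add: integral_unique)
  then show ?thesis
    using Delta_iterate_fstep_eq_integral[OF assms(1,2) _ lam, of 1 \<alpha> y]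
    by (simp add: s_def [symmetric] m_def [symmetric])
qed

lemma norm_scaled_Delta_kernel_le:
  assumes "0 < lam"
  shows "cmod (scaled_Delta_kernel lam m \<alpha> t) \<le> gauss_majorant (1 / 12) \<alpha> t"
proof (cases "t \<in> {-(pi * sqrt lam)..pi * sqrt lam}")
  case True
  then have "\<bar>t / sqrt lam\<bar> \<le> pi"
    using assms by (auto simp: abs_le_iff divide_le_eq le_divide_eq mult.commute)
  then have "cmod (Delta_kernel lam 1 m \<alpha> (t / sqrt lam)) \<le>
      exp (lam * 1) * 1 powi (- m) * 1 ^ \<alpha> * gauss_majorant (1 / 12) \<alpha> (sqrt lam * (t / sqrt lam))"
    using assms by (intro norm_Delta_kernel_le) auto
  then have "exp (- lam) * cmod (Delta_kernel lam 1 m \<alpha> (t / sqrt lam)) \<le> exp (- lam) * (exp lam * gauss_majorant (1 / 12) \<alpha> t)"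
    using assms by (intro mult_left_mono) auto
  also have "\<dots> = gauss_majorant (1 / 12) \<alpha> t"
    by (simp add: mult.assoc [symmetric] flip: exp_add)
  finally have "exp (- lam) * cmod (Delta_kernel lam 1 m \<alpha> (t / sqrt lam)) \<le> gauss_majorant (1 / 12) \<alpha> t" .
  moreover have "cmod (scaled_Delta_kernel lam m \<alpha> t) = exp (- lam) * cmod (Delta_kernel lam 1 m \<alpha> (t / sqrt lam))"
    using True by (simp add: scaled_Delta_kernel_def norm_mult)
  ultimately show ?thesis by simp
next
  case False
  then have "scaled_Delta_kernel lam m \<alpha> t = 0"
    unfolding scaled_Delta_kernel_def by (rule if_not_P)
  then show ?thesis
    by (simp add: gauss_majorant_nonneg)
qed

lemma scaled_Delta_kernel_integrable:
  assumes "0 < lam"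
  shows "scaled_Delta_kernel lam m \<alpha> integrable_on UNIV"
proof -
  have "continuous_on {-(pi * sqrt lam)..pi * sqrt lam} (\<lambda>t. of_real (exp (- lam)) * Delta_kernel lam 1 m \<alpha> (t / sqrt lam))"
    using assms by (intro continuous_intros continuous_on_compose2[OF continuous_on_Delta_kernel[of 1 UNIV]]) auto
  then show ?thesis
    unfolding scaled_Delta_kernel_def integrable_restrict_UNIV by (rule integrable_continuous_interval)
qed

lemma scaled_Delta_kernel_tendsto:
  assumes lam: "filterlim lam at_top sequentially" "\<And>k. 0 < lam k"
  shows "(\<lambda>k. scaled_Delta_kernel (lam k) \<lfloor>y * sqrt (lam k) + lam k\<rfloor> \<alpha> t) \<longlonglongrightarrow> gauss_fourier_integrand \<alpha> y t"
proof -
  define h where "h k = 1 / sqrt (lam k)" for k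
  have h: "h \<longlonglongrightarrow> 0" "h k \<noteq> 0" for k
    using tendsto_inverse_0_at_top[OF filterlim_compose[OF sqrt_at_top lam(1)]] lam(2)[of k]
    by (simp_all add: h_def [abs_def] inverse_eq_divide)
  let ?Z = "\<lambda>k. of_real (lam k) * (cis (t / sqrt (lam k)) - 1)
    - \<i> * of_int \<lfloor>y * sqrt (lam k) + lam k\<rfloor> * of_real (t / sqrt (lam k))"
  let ?C = "\<lambda>k. (cis (- (h k * t)) - 1) / h k"
  have "exp (of_real (- t\<^sup>2 / 2) - \<i> * of_real (y * t)) = of_real (exp (- t\<^sup>2 / 2)) * cis (- (y * t))"
    by (simp only: exp_diff exp_of_real divide_inverse cis_inverse flip: cis_conv_exp)
  then have "exp (of_real (- t\<^sup>2 / 2) - \<i> * of_real (y * t)) * (- \<i> * t) ^ \<alpha> = gauss_fourier_integrand \<alpha> y t"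
    by (simp add: gauss_fourier_integrand_def mult_ac)
  moreover have "(\<lambda>k. exp (?Z k) * ?C k ^ \<alpha>) \<longlonglongrightarrow> exp (of_real (- t\<^sup>2 / 2) - \<i> * of_real (y * t)) * (- \<i> * t) ^ \<alpha>"
    using poisson_phase_tendsto[OF lam, of t y] cis_difference_quotient_tendsto[OF h, of t]
    by (intro tendsto_mult tendsto_exp tendsto_power)
  ultimately have lim: "(\<lambda>k. exp (?Z k) * ?C k ^ \<alpha>) \<longlonglongrightarrow> gauss_fourier_integrand \<alpha> y t"
    by simp
  have "eventually (\<lambda>k. h k < pi / (\<bar>t\<bar> + 1)) sequentially"
    using order_tendstoD(2)[OF h(1)] by simp
  then have "eventually (\<lambda>k. exp (?Z k) * ?C k ^ \<alpha> = scaled_Delta_kernel (lam k) \<lfloor>y * sqrt (lam k) + lam k\<rfloor> \<alpha> t)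
      sequentially"
  proof (rule eventually_mono)
    fix k
    assume "h k < pi / (\<bar>t\<bar> + 1)"
    then have "t \<in> {-(pi * sqrt (lam k))..pi * sqrt (lam k)}"
      using lam(2)[of k] by (auto simp: h_def field_simps abs_le_iff)
    moreover have "?C k = sqrt (lam k) * (cis (- (t / sqrt (lam k))) - 1)"
      by (simp add: h_def)
    ultimately show "exp (?Z k) * ?C k ^ \<alpha> = scaled_Delta_kernel (lam k) \<lfloor>y * sqrt (lam k) + lam k\<rfloor> \<alpha> t"
      by (simp add: scaled_Delta_kernel_def exp_Delta_kernel_unit_circle)
  qed
  with lim show ?thesis
    by (rule Lim_transform_eventually)
qed

lemma Delta_iterate_fstep_tendsto:
  assumes d: "1 \<le> d"
  shows "(\<lambda>n. (Delta d n ^^ \<alpha>) (fstep d n) y) \<longlonglongrightarrow> Re (integral UNIV (gauss_fourier_integrand \<alpha> y)) / (2 * pi)"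
proof -
  define lam where "lam k = real (Suc k) / real d" for k
  have lam_pos: "0 < lam k" for k
    using d by (simp add: lam_def)
  have lam_eq: "lam = (\<lambda>k. inverse (real d) * real (Suc k))"
    by (auto simp: lam_def divide_inverse)
  have "filterlim (\<lambda>k. real (Suc k)) at_top sequentially"
    by (rule filterlim_compose[OF filterlim_real_sequentially filterlim_Suc])
  then have lam: "filterlim lam at_top sequentially"
    unfolding lam_eq using d by (intro filterlim_tendsto_pos_mult_at_top[OF tendsto_const]) auto
  let ?K = "\<lambda>k. scaled_Delta_kernel (lam k) \<lfloor>y * sqrt (lam k) + lam k\<rfloor> \<alpha>"
  have "(\<lambda>k. integral UNIV (?K k)) \<longlonglongrightarrow> integral UNIV (gauss_fourier_integrand \<alpha> y)"
    by (rule dominated_convergence(2)[OF scaled_Delta_kernel_integrable gauss_majorant_integrable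
          norm_scaled_Delta_kernel_le scaled_Delta_kernel_tendsto[OF lam]]) (simp_all add: lam_pos)
  then have "(\<lambda>k. Re (integral UNIV (?K k) / (2 * pi))) \<longlonglongrightarrow> Re (integral UNIV (gauss_fourier_integrand \<alpha> y) / (2 * pi))"
    by (intro tendsto_Re tendsto_divide tendsto_const) auto
  moreover have "Re (integral UNIV (?K k) / (2 * pi)) = (Delta d (Suc k) ^^ \<alpha>) (fstep d (Suc k)) y" for k
  proof -
    have "complex_of_real ((Delta d (Suc k) ^^ \<alpha>) (fstep d (Suc k)) y) = integral UNIV (?K k) / (2 * pi)"
      by (rule Delta_iterate_fstep_eq_scaled_integral[OF d _ lam_def[of k]]) simp
    from arg_cong[where f = Re, OF this] show ?thesis
      by simp
  qed
  ultimately have "(\<lambda>k. (Delta d (Suc k) ^^ \<alpha>) (fstep d (Suc k)) y) \<longlonglongrightarrow> Re (integral UNIV (gauss_fourier_integrand \<alpha> y)) / (2 * pi)"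
    by simp
  then show ?thesis
    by (rule LIMSEQ_imp_Suc)
qed

theorem lemma5:
  fixes d :: nat
  assumes "d \<ge> 1"
  shows "(\<forall>(\<alpha>::nat) (y::real).
            ((\<lambda>n. (Delta d n ^^ \<alpha>) (fstep d n) y) \<longlongrightarrow>
               (deriv ^^ \<alpha>) (\<lambda>t. exp (- (t^2) / 2) / sqrt (2 * pi)) y) sequentially)
       \<and> (\<forall>\<alpha>::nat. \<exists>P :: real poly. \<forall>n::nat. n \<ge> 1 \<longrightarrow>
            (\<forall>y::real. \<bar>(Delta d n ^^ \<alpha>) (fstep d n) y\<bar> < poly P y * exp (- \<bar>y\<bar>)))"
proof (intro conjI allI)
  fix \<alpha> :: nat and y :: real
  show "((\<lambda>n. (Delta d n ^^ \<alpha>) (fstep d n) y) \<longlongrightarrow>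
      (deriv ^^ \<alpha>) (\<lambda>t. exp (- (t^2) / 2) / sqrt (2 * pi)) y) sequentially"
    unfolding higher_deriv_gaussian by (rule Delta_iterate_fstep_tendsto[OF assms])
next
  fix \<alpha> :: nat
  obtain C where C: "\<And>n y. 1 \<le> n \<Longrightarrow> \<bar>(Delta d n ^^ \<alpha>) (fstep d n) y\<bar> \<le> C * exp (- \<bar>y\<bar>)"
    using Delta_iterate_fstep_decay[OF assms] by blast
  have "\<bar>(Delta d n ^^ \<alpha>) (fstep d n) y\<bar> < poly [:C + 1:] y * exp (- \<bar>y\<bar>)" if "1 \<le> n" for n y
  proof -
    have "\<bar>(Delta d n ^^ \<alpha>) (fstep d n) y\<bar> \<le> C * exp (- \<bar>y\<bar>)"
      using C[OF that] .
    also have "\<dots> < (C + 1) * exp (- \<bar>y\<bar>)"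
      by (simp add: distrib_right)
    finally show ?thesis by simp
  qed
  then show "\<exists>P :: real poly. \<forall>n. n \<ge> 1 \<longrightarrow> (\<forall>y. \<bar>(Delta d n ^^ \<alpha>) (fstep d n) y\<bar> < poly P y * exp (- \<bar>y\<bar>))"
    by blast
qed

end
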